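(* For every $d\ge 2$, every $A\in\mathcal C^{d-1}$ and every $p\in[1,\infty)$, $$\max_{C_1,C_2\in\mathcal C^d_A}\|r_{C_1}-r_{C_2}\|_{A,p}=(p+1)^{-1/p}.$$
   Context: $\mathbb I=[0,1]$, $\lambda$ Lebesgue measure. A $d$-copula $C\in\mathcal C^d$ is the distribution function on $\mathbb I^d$ of a probability measure $\mu_C$ with uniform univariate marginals; points are $(\mathbf x,y)$, $\mathbf x\in\mathbb I^{d-1}$. $C_{1:(d-1)}$ is the marginal copula of the first $d-1$ coordinates. For $A\in\mathcal C^{d-1}$, $\mathcal C^d_A=\{C\in\mathcal C^d: C_{1:(d-1)}=A\}$; for $d=2$, $\mu_A=\lambda$ and $\mathcal C^2_A=\mathcal C^2$. $K_C$ is the Markov kernel of $C$ w.r.t. the first $d-1$ coordinates: $\mu_C(B\times F)=\int_B K_C(\mathbf x,F)\,\mathrm d\mu_{C_{1:(d-1)}}(\mathbf x)$. Regression function $r_C(\mathbf x)=\int y\,K_C(\mathbf x,\mathrm dy)$. $\|f\|_{A,p}=(\int_{\mathbb I^{d-1}}|f|^p\,\mathrm d\mu_A)^{1/p}$. *)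

theory Defs
  imports "HOL-Probability.Probability"
begin

definition unif01 :: "real measure" where
  "unif01 = density lborel (indicator {0..1})"

text \<open>A copula on I^k is identified with its probability measure mu_C (on Borel sets)
  having uniform univariate marginals.  Points of I^(d-1) are vectors of type real^'n
  (so CARD('n) = d - 1 >= 1, i.e. d >= 2).\<close>
definition copula_measure_vec :: "(real ^ 'n) measure \<Rightarrow> bool" where
  "copula_measure_vec A \<longleftrightarrow> sets A = sets borel \<and> prob_space A \<and>
     (\<forall>i. distr A lborel (\<lambda>x. x $ i) = unif01)"

definition copula_measure :: "((real ^ 'n) \<times> real) measure \<Rightarrow> bool" where
  "copula_measure C \<longleftrightarrow> sets C = sets borel \<and> prob_space C \<and>
     (\<forall>i. distr C lborel (\<lambda>z. fst z $ i) = unif01) \<and>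
     distr C lborel snd = unif01"

definition marg_first :: "((real ^ 'n) \<times> real) measure \<Rightarrow> (real ^ 'n) measure" where
  "marg_first C = distr C borel fst"

definition copulas_with_marg :: "(real ^ 'n) measure \<Rightarrow> ((real ^ 'n) \<times> real) measure set" where
  "copulas_with_marg A = {C. copula_measure C \<and> marg_first C = A}"

definition markov_kernel_of :: "((real ^ 'n) \<times> real) measure \<Rightarrow> (real ^ 'n \<Rightarrow> real measure) \<Rightarrow> bool" where
  "markov_kernel_of C K \<longleftrightarrow> K \<in> borel \<rightarrow>\<^sub>M prob_algebra borel \<and>
     (\<forall>B \<in> sets borel. \<forall>F \<in> sets borel.
        emeasure C (B \<times> F) = (\<integral>\<^sup>+ x. indicator B x * emeasure (K x) F \<partial>(marg_first C)))"

definition regression :: "(real ^ 'n \<Rightarrow> real measure) \<Rightarrow> real ^ 'n \<Rightarrow> real" where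
  "regression K x = (\<integral> y. y \<partial>(K x))"

definition Lp_norm_A :: "(real ^ 'n) measure \<Rightarrow> real \<Rightarrow> (real ^ 'n \<Rightarrow> real) \<Rightarrow> real" where
  "Lp_norm_A A p f = (enn2real (\<integral>\<^sup>+ x. ennreal (\<bar>f x\<bar> powr p) \<partial>A)) powr (1 / p)"

end

theory Submission
  imports Defs
begin

(*
  Write D = r1 - r2 and g = sgn D * |D|^(p-1), so that |D|^p = g (r1 - 1/2) - g (r2 - 1/2).
  Disintegrating C_i along its kernel turns the mu_A-integral of g (r_i - 1/2) into
  E_{C_i}[g(X) (Y - 1/2)], which Young's inequality with exponents p/(p-1) and p bounds by
  (1 - 1/p)/2 * int |D|^p + 1/(2p) * E|2Y - 1|^p; the last expectation is 1/(p+1) because Y is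
  uniform. Adding the two bounds gives int |D|^p <= 1/(p+1). Equality holds for the completely
  dependent copulas Y = X_i and Y = 1 - X_i, whose regression functions differ by |2 X_i - 1|.
*)

lemma distr_lborel_reflect: "distr lborel borel (\<lambda>y::real. 1 - y) = lborel"
proof -
  have "lborel = density (distr lborel borel (\<lambda>x::real. 1 + (-1) * x)) (\<lambda>_. ennreal \<bar>-1\<bar>)"
    by (rule lborel_real_affine) simp
  then show ?thesis by (simp add: density_1 one_ennreal_def[symmetric])
qed

lemma distr_unif01_reflect: "distr unif01 lborel (\<lambda>y::real. 1 - y) = unif01"
proof (rule measure_eqI)
  show "sets (distr unif01 lborel (\<lambda>y::real. 1 - y)) = sets unif01" by (simp add: unif01_def)
  fix S assume "S \<in> sets (distr unif01 lborel (\<lambda>y::real. 1 - y))"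
  then have S[measurable]: "S \<in> sets borel" by simp
  have "(\<lambda>y::real. 1 - y) -` S \<in> sets borel"
    using measurable_sets_borel[of "\<lambda>y::real. 1 - y" borel S] by simp
  have "emeasure (distr unif01 lborel (\<lambda>y::real. 1 - y)) S
      = (\<integral>\<^sup>+ y. indicator {0..1} y * indicator ((\<lambda>y. 1 - y) -` S) y \<partial>lborel)"
    using \<open>(\<lambda>y::real. 1 - y) -` S \<in> sets borel\<close> unfolding unif01_def
    by (subst emeasure_distr) (auto simp: emeasure_density)
  also have "\<dots> = (\<integral>\<^sup>+ y. (\<lambda>u. indicator {0..1::real} u * indicator S u) (1 - y) \<partial>lborel)"
    by (intro nn_integral_cong) (auto simp: indicator_def)
  also have "\<dots> = (\<integral>\<^sup>+ u. indicator {0..1::real} u * indicator S u \<partial>distr lborel borel (\<lambda>y::real. 1 - y))"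
    by (subst nn_integral_distr) auto
  also have "\<dots> = emeasure unif01 S"
    unfolding distr_lborel_reflect unif01_def by (subst emeasure_density) auto
  finally show "emeasure (distr unif01 lborel (\<lambda>y::real. 1 - y)) S = emeasure unif01 S" .
qed

lemma has_integral_abs_powr_centred:
  assumes "p > -1"
  shows "((\<lambda>y::real. \<bar>2*y - 1\<bar> powr p) has_integral 1/(p+1)) {0..1}"
proof -
  have base: "((\<lambda>x::real. x powr p) has_integral 1/(p+1)) (cbox 0 1)"
    using has_integral_powr_from_0[of p 1] assms by simp
  have "((\<lambda>x::real. (2*x + -1) powr p) has_integral 1/(2*(p+1)))
      ((\<lambda>x. (1/2) *\<^sub>R x + -((1/2) *\<^sub>R (-1))) ` {0..1})"
    using has_integral_affinity[OF base, of 2 "-1"] by simp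
  moreover have "(\<lambda>x::real. (1/2) *\<^sub>R x + -((1/2) *\<^sub>R (-1))) ` {0..1} = {1/2..1}"
    by (auto simp: image_iff field_simps intro!: bexI[where x="2*_ - 1"])
  ultimately have upper_half: "((\<lambda>y::real. \<bar>2*y - 1\<bar> powr p) has_integral 1/(2*(p+1))) {1/2..1}"
    by (auto elim: has_integral_cong[THEN iffD1, rotated])
  have "((\<lambda>x::real. (-2*x + 1) powr p) has_integral 1/(2*(p+1)))
      ((\<lambda>x. (1/(-2)) *\<^sub>R x + -((1/(-2)) *\<^sub>R 1)) ` {0..1})"
    using has_integral_affinity[OF base, of "-2" 1] by simp
  moreover have "(\<lambda>x::real. (1/(-2)) *\<^sub>R x + -((1/(-2)) *\<^sub>R 1)) ` {0..1} = {0..1/2}"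
    by (auto simp: image_iff field_simps intro!: bexI[where x="1 - 2*_"])
  ultimately have lower_half: "((\<lambda>y::real. \<bar>2*y - 1\<bar> powr p) has_integral 1/(2*(p+1))) {0..1/2}"
    by (auto elim: has_integral_cong[THEN iffD1, rotated])
  have "((\<lambda>y::real. \<bar>2*y - 1\<bar> powr p) has_integral (1/(2*(p+1)) + 1/(2*(p+1)))) {0..1}"
    by (rule has_integral_combine[OF _ _ lower_half upper_half]) auto
  moreover have "1/(2*(p+1)) + 1/(2*(p+1)) = 1/(p+1)" using assms by (simp add: field_simps)
  ultimately show ?thesis by simp
qed

lemma nn_integral_unif01_abs_powr_centred:
  assumes "p > -1"
  shows "(\<integral>\<^sup>+ y. ennreal (\<bar>2*y - 1\<bar> powr p) \<partial>unif01) = ennreal (1/(p+1))"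
proof -
  have "(\<integral>\<^sup>+ y. ennreal (\<bar>2*y - 1\<bar> powr p) \<partial>unif01)
      = (\<integral>\<^sup>+ y. ennreal (indicator {0..1} y * \<bar>2*y - 1\<bar> powr p) \<partial>lborel)"
    unfolding unif01_def
    by (subst nn_integral_density) (auto intro!: nn_integral_cong simp: indicator_def)
  also have "\<dots> = ennreal (1/(p+1))"
  proof (rule nn_integral_has_integral_lborel)
    show "((\<lambda>y::real. indicator {0..1} y * \<bar>2*y - 1\<bar> powr p) has_integral 1/(p+1)) UNIV"
      using has_integral_restrict_UNIV[THEN iffD2, OF has_integral_abs_powr_centred[OF assms]]
      by (rule has_integral_cong[THEN iffD1, rotated]) (simp add: indicator_def)
  qed auto
  finally show ?thesis .
qed

lemma integral_unif01_abs_powr_centred: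
  assumes "p > -1"
  shows "(\<integral> y. \<bar>2*y - 1\<bar> powr p \<partial>unif01) = 1/(p+1)"
  using assms
  by (subst integral_eq_nn_integral) (auto simp: unif01_def nn_integral_unif01_abs_powr_centred[unfolded unif01_def])

lemma integrable_bounded_borel:
  fixes f :: "'a::topological_space \<Rightarrow> real"
  assumes "finite_measure M" "sets M = sets borel"
    and "f \<in> borel_measurable borel" "\<And>x. \<bar>f x\<bar> \<le> B"
  shows "integrable M f"
  using assms by (intro finite_measure.integrable_const_bound[where B=B])
    (auto simp: measurable_cong_sets[OF assms(2) refl])

lemma sets_marg_first [simp, measurable_cong]: "sets (marg_first C) = sets borel"
  by (simp add: marg_first_def)

lemma prob_space_marg_first:
  assumes "copula_measure C"
  shows "prob_space (marg_first C)"
proof -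
  have "fst \<in> C \<rightarrow>\<^sub>M borel"
    using assms unfolding copula_measure_def
    by (simp add: measurable_cong_sets[of C borel, OF _ refl] borel_prod[symmetric])
  then show ?thesis
    using assms unfolding copula_measure_def marg_first_def by (auto intro: prob_space.prob_space_distr)
qed

lemma copulas_with_margD:
  assumes "C \<in> copulas_with_marg A"
  shows "copula_measure C" "marg_first C = A" "prob_space A" "sets A = sets borel"
  using assms prob_space_marg_first sets_marg_first by (auto simp: copulas_with_marg_def)

lemma borel_prob_kernelD:
  fixes K :: "'a::topological_space \<Rightarrow> 'b::topological_space measure"
  assumes "K \<in> borel \<rightarrow>\<^sub>M prob_algebra borel"
  shows "sets (K x) = sets borel" "space (K x) = UNIV" "prob_space (K x)"
proof -
  have "K x \<in> space (prob_algebra borel)"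
    using measurable_space[OF assms] by simp
  then show sets: "sets (K x) = sets borel" and "prob_space (K x)"
    by (auto simp: space_prob_algebra)
  from sets show "space (K x) = UNIV"
    using sets_eq_imp_space_eq[of "K x" borel] by simp
qed

lemma measurable_Pair_prob_kernel:
  fixes K :: "'a::topological_space \<Rightarrow> 'b::topological_space measure"
  assumes "K \<in> borel \<rightarrow>\<^sub>M prob_algebra borel"
  shows "(\<lambda>y. (x, y)) \<in> K x \<rightarrow>\<^sub>M borel \<Otimes>\<^sub>M borel"
  by (simp add: measurable_cong_sets[OF borel_prob_kernelD(1)[OF assms] refl])

lemma markov_kernel_of_prob_kernel:
  "markov_kernel_of C K \<Longrightarrow> K \<in> borel \<rightarrow>\<^sub>M prob_algebra borel"
  by (simp add: markov_kernel_of_def)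

lemma markov_kernel_of_measurable:
  "markov_kernel_of C K \<Longrightarrow> K \<in> marg_first C \<rightarrow>\<^sub>M prob_algebra borel"
  by (simp add: markov_kernel_of_def measurable_cong_sets[OF sets_marg_first refl])

definition pair_kernel ::
    "('a::topological_space \<Rightarrow> 'b::topological_space measure) \<Rightarrow> 'a \<Rightarrow> ('a \<times> 'b) measure" where
  "pair_kernel K x = distr (K x) (borel \<Otimes>\<^sub>M borel) (\<lambda>y. (x, y))"

lemma measurable_pair_kernel:
  assumes "K \<in> M \<rightarrow>\<^sub>M prob_algebra borel" "sets M = sets borel"
  shows "pair_kernel K \<in> M \<rightarrow>\<^sub>M prob_algebra (borel \<Otimes>\<^sub>M borel)"
  unfolding pair_kernel_def
proof (rule measurable_distr_prob_space2[OF assms(1)])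
  show "(\<lambda>(x, y). (x, y)) \<in> M \<Otimes>\<^sub>M borel \<rightarrow>\<^sub>M borel \<Otimes>\<^sub>M borel"
    using assms(2) by (simp add: measurable_cong_sets[OF sets_pair_measure_cong[OF assms(2) refl] refl])
qed

lemma measurable_pair_kernel_marg_first:
  "markov_kernel_of C K \<Longrightarrow> pair_kernel K \<in> marg_first C \<rightarrow>\<^sub>M prob_algebra (borel \<Otimes>\<^sub>M borel)"
  by (rule measurable_pair_kernel[OF markov_kernel_of_measurable]) simp_all

lemma emeasure_pair_kernel_Times:
  fixes K :: "'a::topological_space \<Rightarrow> 'b::topological_space measure"
  assumes "K \<in> borel \<rightarrow>\<^sub>M prob_algebra borel" "B \<in> sets borel" "F \<in> sets borel"
  shows "emeasure (pair_kernel K x) (B \<times> F) = indicator B x * emeasure (K x) F"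
proof -
  have "emeasure (pair_kernel K x) (B \<times> F) = emeasure (K x) ((\<lambda>y. (x, y)) -` (B \<times> F) \<inter> space (K x))"
    unfolding pair_kernel_def
    by (rule emeasure_distr[OF measurable_Pair_prob_kernel[OF assms(1)]]) (simp add: assms)
  also have "(\<lambda>y. (x, y)) -` (B \<times> F) \<inter> space (K x) = (if x \<in> B then F else {})"
    using borel_prob_kernelD(2)[OF assms(1)] by auto
  finally show ?thesis by (simp add: indicator_def)
qed

lemma copula_measure_disintegration:
  fixes C :: "((real^'n) \<times> real) measure"
  assumes C: "copula_measure C" and K: "markov_kernel_of C K"
  shows "C = marg_first C \<bind> pair_kernel K"
proof -
  let ?M = "marg_first C"
  let ?E = "{a \<times> b | a b. a \<in> sets (borel::(real^'n) measure) \<and> b \<in> sets (borel::real measure)}"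
  note KM = measurable_pair_kernel_marg_first[OF K]
  have M: "?M \<in> space (prob_algebra ?M)"
    using prob_space_marg_first[OF C] by (simp add: space_prob_algebra)
  have sets_C: "sets C = sets borel" and "prob_space C"
    using C by (simp_all add: copula_measure_def)
  show ?thesis
  proof (rule measure_eqI_generator_eq[where E="?E" and \<Omega>=UNIV and A="\<lambda>_. UNIV"])
    show "Int_stable ?E" by (rule Int_stable_pair_measure_generator)
    show "sets C = sigma_sets UNIV ?E"
      using sets_C by (simp add: borel_prod[symmetric] sets_pair_measure)
    show "sets (?M \<bind> pair_kernel K) = sigma_sets UNIV ?E"
      by (simp add: sets_bind'[OF M KM] sets_pair_measure)
    show "?E \<subseteq> Pow UNIV" "range (\<lambda>_. UNIV) \<subseteq> ?E" "(\<Union>i::nat. UNIV) = UNIV"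
      by (auto intro!: exI[of _ UNIV])
    show "emeasure C UNIV \<noteq> \<infinity>" for i :: nat
      using sets_eq_imp_space_eq[OF sets_C] prob_space.emeasure_space_1[OF \<open>prob_space C\<close>] by simp
  next
    fix X assume "X \<in> ?E"
    then obtain a b where X: "X = a \<times> b" and ab: "a \<in> sets borel" "b \<in> sets borel" by auto
    have "emeasure (?M \<bind> pair_kernel K) X = (\<integral>\<^sup>+ x. emeasure (pair_kernel K x) X \<partial>?M)"
      by (rule emeasure_bind_prob_algebra[OF M KM]) (simp add: X ab)
    also have "\<dots> = (\<integral>\<^sup>+ x. indicator a x * emeasure (K x) b \<partial>?M)"
      unfolding X using emeasure_pair_kernel_Times[OF markov_kernel_of_prob_kernel[OF K] ab]
      by (simp only:)
    also have "\<dots> = emeasure C X"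
      using K ab unfolding X markov_kernel_of_def by simp
    finally show "emeasure C X = emeasure (?M \<bind> pair_kernel K) X" by simp
  qed
qed

lemma integral_copula_disintegration:
  fixes C :: "((real^'n) \<times> real) measure" and f :: "(real^'n) \<times> real \<Rightarrow> real"
  assumes C: "copula_measure C" and K: "markov_kernel_of C K"
    and f: "f \<in> borel_measurable borel" "\<And>z. \<bar>f z\<bar> \<le> B"
  shows "(\<integral> z. f z \<partial>C) = (\<integral> x. (\<integral> y. f (x, y) \<partial>K x) \<partial>marg_first C)"
proof -
  let ?M = "marg_first C"
  note Kx = borel_prob_kernelD[OF markov_kernel_of_prob_kernel[OF K]]
  note KM = measurable_pair_kernel_marg_first[OF K]
  have f_prod: "f \<in> borel_measurable (borel \<Otimes>\<^sub>M borel)"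
    using f(1) by (simp add: borel_prod)
  note pair_x = measurable_Pair_prob_kernel[OF markov_kernel_of_prob_kernel[OF K]]
  have "(\<integral> z. f z \<partial>C) = (\<integral> z. f z \<partial>(?M \<bind> pair_kernel K))"
    by (rule arg_cong[OF copula_measure_disintegration[OF C K]])
  also have "\<dots> = (\<integral> x. integral\<^sup>L (pair_kernel K x) f \<partial>?M)"
  proof (rule integral_bind[OF f_prod _ measurable_prob_algebraD[OF KM], where B=B and B'=1])
    show "finite_measure ?M"
      using prob_space_marg_first[OF C] by (simp add: prob_space_def)
    have "prob_space (pair_kernel K x)" for x
      unfolding pair_kernel_def by (rule prob_space.prob_space_distr[OF Kx(3) pair_x])
    then show "AE x in ?M. emeasure (pair_kernel K x) (space (pair_kernel K x)) \<le> ennreal 1"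
      by (simp add: prob_space.emeasure_space_1)
  qed (use f(2) in simp)
  also have "\<dots> = (\<integral> x. (\<integral> y. f (x, y) \<partial>K x) \<partial>?M)"
    unfolding pair_kernel_def by (simp add: integral_distr[OF pair_x f_prod])
  finally show ?thesis .
qed

lemma AE_copula_measure_snd_unit:
  fixes C :: "((real^'n) \<times> real) measure"
  assumes "copula_measure C"
  shows "AE z in C. snd z \<in> {0..1}"
proof -
  have snd: "snd \<in> C \<rightarrow>\<^sub>M lborel"
    using assms unfolding copula_measure_def
    by (simp add: measurable_cong_sets[of C borel, OF _ refl] borel_prod[symmetric])
  have Y: "distr C lborel snd = unif01"
    using assms by (simp add: copula_measure_def)
  have "AE y in unif01. y \<in> {0..1}"
    unfolding unif01_def by (subst AE_density) (auto simp: indicator_def)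
  then have "AE y in distr C lborel snd. y \<in> {0..1}"
    by (simp only: Y)
  then show ?thesis
    by (subst (asm) AE_distr_iff[OF snd]) auto
qed

lemma AE_markov_kernel_unit:
  fixes C :: "((real^'n) \<times> real) measure"
  assumes C: "copula_measure C" and K: "markov_kernel_of C K"
  shows "AE x in marg_first C. AE y in K x. y \<in> {0..1}"
proof -
  let ?M = "marg_first C"
  note KM = measurable_pair_kernel_marg_first[OF K]
  have unit: "Measurable.pred (borel \<Otimes>\<^sub>M borel) (\<lambda>z::(real^'n) \<times> real. snd z \<in> {0..1})"
    by measurable
  have "AE z in ?M \<bind> pair_kernel K. snd z \<in> {0..1}"
    by (subst copula_measure_disintegration[OF C K, symmetric]) (rule AE_copula_measure_snd_unit[OF C])
  then have "AE x in ?M. AE z in pair_kernel K x. snd z \<in> {0..1}"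
    using AE_bind[OF measurable_prob_algebraD[OF KM] unit] by blast
  then show ?thesis
  proof (rule AE_mp[OF _ AE_I2], intro impI)
    fix x assume "AE z in pair_kernel K x. snd z \<in> {0..1}"
    then have "AE y in K x. snd (x, y) \<in> {0..1}"
      unfolding pair_kernel_def
      using AE_distr_iff[OF measurable_Pair_prob_kernel[OF markov_kernel_of_prob_kernel[OF K]]
          unit[unfolded pred_def]] by blast
    then show "AE y in K x. y \<in> {0..1}" by simp
  qed
qed

definition clip01 :: "real \<Rightarrow> real" where
  "clip01 y = max 0 (min 1 y)"

(* The Bochner integral in regression K is junk where K x has no first moment; clipping the
   integrand to [0,1] gives a version that is measurable and bounded everywhere and agrees with
   it almost everywhere. *)
definition clipped_regression :: "('a \<Rightarrow> real measure) \<Rightarrow> 'a \<Rightarrow> real" where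
  "clipped_regression K x = (\<integral> y. clip01 y \<partial>K x)"

lemma clip01_bounds: "0 \<le> clip01 y" "clip01 y \<le> 1"
  by (auto simp: clip01_def)

lemma borel_measurable_clip01 [measurable]: "clip01 \<in> borel_measurable borel"
  unfolding clip01_def by measurable

lemma integrable_prob_kernel_clip01:
  fixes K :: "'a::topological_space \<Rightarrow> real measure"
  assumes "K \<in> borel \<rightarrow>\<^sub>M prob_algebra borel"
  shows "integrable (K x) clip01"
  using borel_prob_kernelD[OF assms] clip01_bounds
  by (intro integrable_bounded_borel[where B=1]) (auto simp: prob_space_def)

lemma clipped_regression_bounds:
  fixes K :: "'a::topological_space \<Rightarrow> real measure"
  assumes "K \<in> borel \<rightarrow>\<^sub>M prob_algebra borel"
  shows "0 \<le> clipped_regression K x" "clipped_regression K x \<le> 1"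
proof -
  interpret prob_space "K x" by (rule borel_prob_kernelD(3)[OF assms])
  from integrable_prob_kernel_clip01[OF assms] show "clipped_regression K x \<le> 1"
    unfolding clipped_regression_def by (rule integral_le_const) (simp add: clip01_bounds)
  show "0 \<le> clipped_regression K x"
    unfolding clipped_regression_def by (rule Bochner_Integration.integral_nonneg) (simp add: clip01_bounds)
qed

lemma borel_measurable_clipped_regression:
  fixes K :: "'a::topological_space \<Rightarrow> real measure"
  assumes "K \<in> borel \<rightarrow>\<^sub>M prob_algebra borel"
  shows "clipped_regression K \<in> borel_measurable borel"
  unfolding clipped_regression_def
  using measurable_compose[OF measurable_prob_algebraD[OF assms]
      integral_measurable_subprob_algebra[OF borel_measurable_clip01]]
  by simp

lemma AE_regression_eq_clipped:
  fixes A :: "(real^'n) measure"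
  assumes C: "C \<in> copulas_with_marg A" and K: "markov_kernel_of C K"
  shows "AE x in A. regression K x = clipped_regression K x"
proof -
  have "AE x in A. AE y in K x. y \<in> {0..1}"
    using AE_markov_kernel_unit[OF copulas_with_margD(1)[OF C] K] unfolding copulas_with_margD(2)[OF C] .
  moreover have "regression K x = clipped_regression K x" if unit: "AE y in K x. y \<in> {0..1}" for x
  proof -
    have sets_K: "sets (K x) = sets borel"
      by (rule borel_prob_kernelD(1)[OF markov_kernel_of_prob_kernel[OF K]])
    show ?thesis
      unfolding regression_def clipped_regression_def
      by (rule integral_cong_AE)
        (auto simp: measurable_cong_sets[OF sets_K refl] clip01_def intro!: AE_mp[OF unit AE_I2])
  qed
  ultimately show ?thesis
    by (auto elim: AE_mp)
qed

definition signed_powr :: "real \<Rightarrow> real \<Rightarrow> real" where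
  "signed_powr p d = sgn d * \<bar>d\<bar> powr (p - 1)"

lemma borel_measurable_signed_powr [measurable]: "signed_powr p \<in> borel_measurable borel"
  unfolding signed_powr_def by measurable

lemma signed_powr_minus: "signed_powr p (- d) = - signed_powr p d"
  by (simp add: signed_powr_def)

lemma signed_powr_mult_self: "signed_powr p d * d = \<bar>d\<bar> powr p"
proof (cases "d = 0")
  case False
  then have "\<bar>d\<bar> powr (p - 1) * \<bar>d\<bar> = \<bar>d\<bar> powr p"
    by (simp add: powr_diff field_simps)
  then show ?thesis using False by (auto simp: signed_powr_def sgn_if)
qed (simp add: signed_powr_def)

lemma abs_signed_powr_le_one:
  assumes "1 \<le> p" "\<bar>d\<bar> \<le> 1"
  shows "\<bar>signed_powr p d\<bar> \<le> 1"
proof -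
  have "\<bar>d\<bar> powr (p - 1) \<le> 1"
    using assms by (cases "d = 0") (auto intro!: powr_le1)
  then show ?thesis by (auto simp: signed_powr_def sgn_if abs_mult)
qed

lemma signed_powr_mult_le:
  assumes p: "1 \<le> p"
  shows "signed_powr p d * w \<le> (1 - 1/p)/2 * \<bar>d\<bar> powr p + (1/p)/2 * \<bar>2*w\<bar> powr p"
proof (cases "p = 1")
  case True
  then show ?thesis by (auto simp: signed_powr_def sgn_if abs_mult)
next
  case False
  with p have p1: "p > 1" by simp
  define q where "q = p / (p - 1)"
  have q1: "q > 1" and pq: "1/q + 1/p = 1"
    using p1 by (simp_all add: q_def field_simps)
  have "signed_powr p d * w \<le> (\<bar>d\<bar> powr (p - 1) * \<bar>2*w\<bar>) / 2"
    by (auto simp: signed_powr_def sgn_if abs_mult intro: mult_right_mono order.trans[OF _ abs_ge_self])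
  also have "\<dots> \<le> ((\<bar>d\<bar> powr (p - 1)) powr q / q + \<bar>2*w\<bar> powr p / p) / 2"
    using Youngs_inequality[OF q1 p1 pq, of "\<bar>d\<bar> powr (p - 1)" "\<bar>2*w\<bar>"] by simp
  also have "(\<bar>d\<bar> powr (p - 1)) powr q = \<bar>d\<bar> powr p"
    using p1 by (simp add: powr_powr q_def)
  finally show ?thesis
    using p1 by (simp add: q_def field_simps)
qed

lemma integral_mult_clipped_regression_disintegration:
  fixes C :: "((real^'n) \<times> real) measure"
  assumes C: "copula_measure C" and K: "markov_kernel_of C K"
    and h: "h \<in> borel_measurable borel" "\<And>x. \<bar>h x\<bar> \<le> 1"
  shows "(\<integral> x. h x * (clipped_regression K x - 1/2) \<partial>marg_first C)
       = (\<integral> z. h (fst z) * (clip01 (snd z) - 1/2) \<partial>C)"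
proof -
  note kernel = markov_kernel_of_prob_kernel[OF K]
  have inner: "h x * (clipped_regression K x - 1/2) = (\<integral> y. h x * (clip01 y - 1/2) \<partial>K x)" for x
  proof -
    interpret prob_space "K x" by (rule borel_prob_kernelD(3)[OF kernel])
    show ?thesis
      using integrable_prob_kernel_clip01[OF kernel] unfolding clipped_regression_def by (simp add: prob_space)
  qed
  then have "(\<integral> x. h x * (clipped_regression K x - 1/2) \<partial>marg_first C)
      = (\<integral> x. (\<integral> y. h (fst (x, y)) * (clip01 (snd (x, y)) - 1/2) \<partial>K x) \<partial>marg_first C)"
    by (simp only: inner fst_conv snd_conv)
  also have "\<dots> = (\<integral> z. h (fst z) * (clip01 (snd z) - 1/2) \<partial>C)"
  proof (rule integral_copula_disintegration[OF C K, symmetric, where B=1])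
    show "(\<lambda>z. h (fst z) * (clip01 (snd z) - 1/2)) \<in> borel_measurable (borel :: ((real^'n) \<times> real) measure)"
      unfolding borel_prod[symmetric] using h(1) by measurable
    show "\<bar>h (fst z) * (clip01 (snd z) - 1/2)\<bar> \<le> 1" for z :: "(real^'n) \<times> real"
      using h(2)[of "fst z"] clip01_bounds[of "snd z"] by (auto simp: abs_mult intro: mult_le_one)
  qed
  finally show ?thesis .
qed

lemma integral_copula_abs_powr_clip01_snd:
  fixes C :: "((real^'n) \<times> real) measure"
  assumes C: "copula_measure C" and p: "p > -1"
  shows "(\<integral> z. \<bar>2 * clip01 (snd z) - 1\<bar> powr p \<partial>C) = 1/(p+1)"
proof -
  have snd: "snd \<in> C \<rightarrow>\<^sub>M lborel"
    using C unfolding copula_measure_def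
    by (simp add: measurable_cong_sets[of C borel, OF _ refl] borel_prod[symmetric])
  have Y: "distr C lborel snd = unif01"
    using C by (simp add: copula_measure_def)
  have "(\<integral> z. \<bar>2 * clip01 (snd z) - 1\<bar> powr p \<partial>C) = (\<integral> y. \<bar>2 * clip01 y - 1\<bar> powr p \<partial>distr C lborel snd)"
    by (rule integral_distr[symmetric, OF snd]) measurable
  also have "\<dots> = (\<integral> y. \<bar>2 * y - 1\<bar> powr p \<partial>unif01)"
    unfolding Y unif01_def
    by (rule integral_cong_AE) (auto simp: AE_density indicator_def clip01_def)
  also have "\<dots> = 1/(p+1)"
    by (rule integral_unif01_abs_powr_centred[OF p])
  finally show ?thesis .
qed

lemma integral_mult_clipped_regression_le:
  fixes C :: "((real^'n) \<times> real) measure"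
  assumes C: "copula_measure C" and K: "markov_kernel_of C K" and p: "1 \<le> p"
    and h: "h \<in> borel_measurable borel" "\<And>x. \<bar>h x\<bar> \<le> 1"
    and \<phi>: "\<phi> \<in> borel_measurable borel" "\<And>x. 0 \<le> \<phi> x \<and> \<phi> x \<le> 1"
    and c: "0 \<le> c1" "0 \<le> c2"
    and Young: "\<And>x w. h x * w \<le> c1 * \<phi> x + c2 * \<bar>2*w\<bar> powr p"
  shows "(\<integral> x. h x * (clipped_regression K x - 1/2) \<partial>marg_first C)
       \<le> c1 * (\<integral> x. \<phi> x \<partial>marg_first C) + c2 * (1/(p+1))"
proof -
  have sets_C: "sets C = sets borel" and "prob_space C"
    using C by (simp_all add: copula_measure_def)
  then have "finite_measure C" by (simp add: prob_space_def)
  note integrable = integrable_bounded_borel[OF this sets_C]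
  have [measurable]: "h \<in> borel_measurable borel" "\<phi> \<in> borel_measurable borel"
    using h(1) \<phi>(1) .
  have clip_powr_le: "\<bar>2 * clip01 y - 1\<bar> powr p \<le> 1" for y
    using clip01_bounds[of y] p by (intro powr_le1) auto
  have "\<bar>h x * (clip01 y - 1/2)\<bar> \<le> 1" for x y
    using h(2)[of x] clip01_bounds[of y] by (auto simp: abs_mult intro: mult_le_one)
  then have lhs: "integrable C (\<lambda>z. h (fst z) * (clip01 (snd z) - 1/2))"
    by (intro integrable[where B=1]) (auto simp: borel_prod[symmetric])
  have int_\<phi>: "integrable C (\<lambda>z. \<phi> (fst z))"
    using \<phi>(2) by (intro integrable[where B=1]) (auto simp: borel_prod[symmetric] abs_le_iff)
  have int_clip: "integrable C (\<lambda>z. \<bar>2 * clip01 (snd z) - 1\<bar> powr p)"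
    using clip_powr_le by (intro integrable[where B=1]) (auto simp: borel_prod[symmetric])
  have "(\<integral> x. h x * (clipped_regression K x - 1/2) \<partial>marg_first C)
      = (\<integral> z. h (fst z) * (clip01 (snd z) - 1/2) \<partial>C)"
    by (rule integral_mult_clipped_regression_disintegration[OF C K h])
  also have "\<dots> \<le> (\<integral> z. c1 * \<phi> (fst z) + c2 * \<bar>2 * clip01 (snd z) - 1\<bar> powr p \<partial>C)"
    using Young[of "fst _" "clip01 (snd _) - 1/2"] lhs int_\<phi> int_clip
    by (intro integral_mono) (auto simp: algebra_simps)
  also have "\<dots> = c1 * (\<integral> z. \<phi> (fst z) \<partial>C) + c2 * (\<integral> z. \<bar>2 * clip01 (snd z) - 1\<bar> powr p \<partial>C)"
    using int_\<phi> int_clip by simp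
  also have "(\<integral> z. \<phi> (fst z) \<partial>C) = (\<integral> x. \<phi> x \<partial>marg_first C)"
    unfolding marg_first_def using sets_C
    by (intro integral_distr[symmetric]) (auto simp: measurable_cong_sets[OF sets_C refl] borel_prod[symmetric])
  also have "(\<integral> z. \<bar>2 * clip01 (snd z) - 1\<bar> powr p \<partial>C) = 1/(p+1)"
    using p by (intro integral_copula_abs_powr_clip01_snd[OF C]) simp
  finally show ?thesis .
qed

lemma integral_signed_powr_mult_clipped_regression_le:
  fixes A :: "(real^'n) measure"
  assumes p: "1 \<le> p" and C: "C \<in> copulas_with_marg A" and K: "markov_kernel_of C K"
    and D: "D \<in> borel_measurable borel" "\<And>x. \<bar>D x\<bar> \<le> 1"
  shows "(\<integral> x. signed_powr p (D x) * (clipped_regression K x - 1/2) \<partial>A)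
       \<le> (1 - 1/p)/2 * (\<integral> x. \<bar>D x\<bar> powr p \<partial>A) + (1/p)/2 * (1/(p+1))"
proof -
  note cop = copulas_with_margD(1)[OF C] and marg = copulas_with_margD(2)[OF C]
  have [measurable]: "D \<in> borel_measurable borel"
    by (rule D(1))
  have g_meas: "(\<lambda>x. signed_powr p (D x)) \<in> borel_measurable borel"
    by measurable
  have powr_meas: "(\<lambda>x. \<bar>D x\<bar> powr p) \<in> borel_measurable borel"
    by measurable
  have powr_bounds: "0 \<le> \<bar>D x\<bar> powr p \<and> \<bar>D x\<bar> powr p \<le> 1" for x
    using D(2)[of x] p by (auto intro!: powr_le1)
  have c: "0 \<le> (1 - 1/p)/2" "0 \<le> (1/p)/2"
    using p by simp_all
  have Young: "signed_powr p (D x) * w \<le> (1 - 1/p)/2 * \<bar>D x\<bar> powr p + (1/p)/2 * \<bar>2*w\<bar> powr p" for x w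
    by (rule signed_powr_mult_le[OF p])
  show ?thesis
    using integral_mult_clipped_regression_le[OF cop K p g_meas abs_signed_powr_le_one[OF p D(2)]
        powr_meas powr_bounds c Young]
    unfolding marg .
qed

lemma integral_abs_powr_clipped_regression_diff_le:
  fixes A :: "(real^'n) measure"
  assumes p: "1 \<le> p"
    and C1: "C1 \<in> copulas_with_marg A" and K1: "markov_kernel_of C1 K1"
    and C2: "C2 \<in> copulas_with_marg A" and K2: "markov_kernel_of C2 K2"
  shows "(\<integral> x. \<bar>clipped_regression K1 x - clipped_regression K2 x\<bar> powr p \<partial>A) \<le> 1/(p+1)"
proof -
  interpret A: prob_space A by (rule copulas_with_margD(3)[OF C1])
  note integrable = integrable_bounded_borel[OF A.finite_measure_axioms copulas_with_margD(4)[OF C1]]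
  note r1 = markov_kernel_of_prob_kernel[OF K1] and r2 = markov_kernel_of_prob_kernel[OF K2]
  define D where "D x = clipped_regression K1 x - clipped_regression K2 x" for x
  define M where "M = (\<integral> x. \<bar>D x\<bar> powr p \<partial>A)"
  define c where "c = 1/p"
  define t where "t = 1/(p+1)"
  have D_meas [measurable]: "D \<in> borel_measurable borel"
    unfolding D_def using borel_measurable_clipped_regression[OF r1] borel_measurable_clipped_regression[OF r2]
    by measurable
  have D_le: "\<bar>D x\<bar> \<le> 1" for x
    unfolding D_def using clipped_regression_bounds[OF r1, of x] clipped_regression_bounds[OF r2, of x] by auto
  have bound1: "(\<integral> x. signed_powr p (D x) * (clipped_regression K1 x - 1/2) \<partial>A) \<le> (1 - c)/2 * M + c/2 * t"
    using integral_signed_powr_mult_clipped_regression_le[OF p C1 K1 D_meas D_le]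
    unfolding M_def c_def t_def .
  have bound2: "(\<integral> x. - signed_powr p (D x) * (clipped_regression K2 x - 1/2) \<partial>A) \<le> (1 - c)/2 * M + c/2 * t"
    using integral_signed_powr_mult_clipped_regression_le[OF p C2 K2, of "\<lambda>x. - D x"] D_le
    unfolding M_def c_def t_def by (simp add: signed_powr_minus)
  have centred_le: "\<bar>clipped_regression K x - 1/2\<bar> \<le> 1" if "K \<in> borel \<rightarrow>\<^sub>M prob_algebra borel" for K x
    using clipped_regression_bounds[OF that, of x] by auto
  have "M = (\<integral> x. signed_powr p (D x) * (clipped_regression K1 x - 1/2)
      + - signed_powr p (D x) * (clipped_regression K2 x - 1/2) \<partial>A)"
    unfolding M_def signed_powr_mult_self[symmetric] D_def by (simp add: algebra_simps)
  also have "\<dots> = (\<integral> x. signed_powr p (D x) * (clipped_regression K1 x - 1/2) \<partial>A)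
      + (\<integral> x. - signed_powr p (D x) * (clipped_regression K2 x - 1/2) \<partial>A)"
    using abs_signed_powr_le_one[OF p D_le] centred_le[OF r1] centred_le[OF r2]
      borel_measurable_clipped_regression[OF r1] borel_measurable_clipped_regression[OF r2]
    by (intro Bochner_Integration.integral_add integrable[where B=1])
      (auto simp: abs_mult intro: mult_le_one)
  finally have "M \<le> ((1 - c)/2 * M + c/2 * t) + ((1 - c)/2 * M + c/2 * t)"
    using add_mono[OF bound1 bound2] by simp
  then have "c * M \<le> c * t"
    by (simp add: algebra_simps)
  then have "M \<le> t"
    by (rule mult_left_le_imp_le) (use p in \<open>simp add: c_def\<close>)
  then show ?thesis
    unfolding M_def D_def t_def .
qed

lemma Lp_norm_regression_diff_le:
  fixes A :: "(real^'n) measure"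
  assumes p: "1 \<le> p"
    and C1: "C1 \<in> copulas_with_marg A" and K1: "markov_kernel_of C1 K1"
    and C2: "C2 \<in> copulas_with_marg A" and K2: "markov_kernel_of C2 K2"
  shows "Lp_norm_A A p (\<lambda>x. regression K1 x - regression K2 x) \<le> (p + 1) powr (- 1 / p)"
proof -
  interpret A: prob_space A by (rule copulas_with_margD(3)[OF C1])
  note r1 = markov_kernel_of_prob_kernel[OF K1] and r2 = markov_kernel_of_prob_kernel[OF K2]
  define M where "M = (\<integral> x. \<bar>clipped_regression K1 x - clipped_regression K2 x\<bar> powr p \<partial>A)"
  have "(\<integral>\<^sup>+ x. ennreal (\<bar>regression K1 x - regression K2 x\<bar> powr p) \<partial>A)
      = (\<integral>\<^sup>+ x. ennreal (\<bar>clipped_regression K1 x - clipped_regression K2 x\<bar> powr p) \<partial>A)"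
  proof (rule nn_integral_cong_AE)
    from AE_regression_eq_clipped[OF C1 K1] AE_regression_eq_clipped[OF C2 K2]
    show "AE x in A. ennreal (\<bar>regression K1 x - regression K2 x\<bar> powr p)
        = ennreal (\<bar>clipped_regression K1 x - clipped_regression K2 x\<bar> powr p)"
      by eventually_elim simp
  qed
  also have "\<dots> = ennreal M"
    unfolding M_def
  proof (intro nn_integral_eq_integral integrable_bounded_borel[where B=1])
    show "(\<lambda>x. \<bar>clipped_regression K1 x - clipped_regression K2 x\<bar> powr p) \<in> borel_measurable borel"
      using borel_measurable_clipped_regression[OF r1] borel_measurable_clipped_regression[OF r2] by measurable
    show "\<bar>\<bar>clipped_regression K1 x - clipped_regression K2 x\<bar> powr p\<bar> \<le> 1" for x
      using clipped_regression_bounds[OF r1, of x] clipped_regression_bounds[OF r2, of x] p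
      by (auto intro!: powr_le1)
  qed (auto simp: A.finite_measure_axioms copulas_with_margD(4)[OF C1])
  finally have "Lp_norm_A A p (\<lambda>x. regression K1 x - regression K2 x) = M powr (1/p)"
    by (simp add: Lp_norm_A_def M_def)
  also have "\<dots> \<le> (1/(p+1)) powr (1/p)"
    using integral_abs_powr_clipped_regression_diff_le[OF p C1 K1 C2 K2] p
    by (intro powr_mono2) (auto simp: M_def)
  also have "\<dots> = (p + 1) powr (- 1 / p)"
    using p by (simp add: powr_minus_divide powr_divide)
  finally show ?thesis .
qed

definition graph_copula :: "(real^'n) measure \<Rightarrow> (real^'n \<Rightarrow> real) \<Rightarrow> ((real^'n) \<times> real) measure" where
  "graph_copula A \<phi> = distr A borel (\<lambda>x. (x, \<phi> x))"

lemma measurable_graph: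
  fixes \<phi> :: "real^'n \<Rightarrow> real"
  assumes "sets A = sets borel" "\<phi> \<in> borel_measurable borel"
  shows "(\<lambda>x. (x, \<phi> x)) \<in> A \<rightarrow>\<^sub>M borel"
  unfolding borel_prod[symmetric] using assms
  by (intro measurable_Pair) (simp_all add: measurable_cong_sets[OF assms(1) refl])

lemma marg_first_graph_copula:
  fixes \<phi> :: "real^'n \<Rightarrow> real"
  assumes "sets A = sets borel" "\<phi> \<in> borel_measurable borel"
  shows "marg_first (graph_copula A \<phi>) = A"
proof -
  have "marg_first (graph_copula A \<phi>) = distr A borel (fst \<circ> (\<lambda>x. (x, \<phi> x)))"
    unfolding marg_first_def graph_copula_def
    by (rule distr_distr[OF _ measurable_graph[OF assms]]) (simp add: borel_prod[symmetric])
  also have "\<dots> = A"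
    by (simp add: o_def distr_id2[OF assms(1)[symmetric]])
  finally show ?thesis .
qed

lemma graph_copula_in_copulas_with_marg:
  fixes A :: "(real^'n) measure"
  assumes A: "copula_measure_vec A"
    and \<phi>: "\<phi> \<in> borel_measurable borel" "distr A lborel \<phi> = unif01"
  shows "graph_copula A \<phi> \<in> copulas_with_marg A"
proof -
  have sets_A: "sets A = sets borel" and "prob_space A"
    using A by (simp_all add: copula_measure_vec_def)
  note graph = measurable_graph[OF sets_A \<phi>(1)]
  have push: "distr (graph_copula A \<phi>) lborel f = distr A lborel (\<lambda>x. f (x, \<phi> x))"
    if "f \<in> (borel :: ((real^'n) \<times> real) measure) \<rightarrow>\<^sub>M lborel" for f
    unfolding graph_copula_def using distr_distr[OF that graph] by (simp add: o_def)
  have "(\<lambda>z. fst z $ i) \<in> (borel :: ((real^'n) \<times> real) measure) \<rightarrow>\<^sub>M lborel" for i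
    unfolding borel_prod[symmetric] by (rule measurable_compose[OF measurable_fst]) simp
  then have "distr (graph_copula A \<phi>) lborel (\<lambda>z. fst z $ i) = unif01" for i
    using A by (simp add: push copula_measure_vec_def)
  moreover have "snd \<in> (borel :: ((real^'n) \<times> real) measure) \<rightarrow>\<^sub>M lborel"
    by (simp add: borel_prod[symmetric])
  then have "distr (graph_copula A \<phi>) lborel snd = unif01"
    using \<phi>(2) by (simp add: push)
  moreover have "prob_space (graph_copula A \<phi>)"
    unfolding graph_copula_def using \<open>prob_space A\<close> graph by (rule prob_space.prob_space_distr)
  ultimately have "copula_measure (graph_copula A \<phi>)"
    by (simp add: copula_measure_def graph_copula_def)
  then show ?thesis
    using marg_first_graph_copula[OF sets_A \<phi>(1)] by (simp add: copulas_with_marg_def)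
qed

lemma markov_kernel_of_graph_copula:
  fixes \<phi> :: "real^'n \<Rightarrow> real"
  assumes sets_A: "sets A = sets borel" and \<phi>: "\<phi> \<in> borel_measurable borel"
  shows "markov_kernel_of (graph_copula A \<phi>) (\<lambda>x. return borel (\<phi> x))"
  unfolding markov_kernel_of_def marg_first_graph_copula[OF assms]
proof (intro conjI ballI)
  show "(\<lambda>x. return borel (\<phi> x)) \<in> borel \<rightarrow>\<^sub>M prob_algebra borel"
    by (rule measurable_compose[OF \<phi> measurable_return_prob_space])
  fix B :: "(real^'n) set" and F :: "real set"
  assume "B \<in> sets borel" "F \<in> sets borel"
  then have BF: "B \<times> F \<in> sets (borel :: ((real^'n) \<times> real) measure)"
    by (simp add: borel_prod[symmetric])
  note graph = measurable_graph[OF assms]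
  have "emeasure (graph_copula A \<phi>) (B \<times> F) = emeasure A ((\<lambda>x. (x, \<phi> x)) -` (B \<times> F) \<inter> space A)"
    unfolding graph_copula_def by (rule emeasure_distr[OF graph BF])
  also have "\<dots> = (\<integral>\<^sup>+ x. indicator ((\<lambda>x. (x, \<phi> x)) -` (B \<times> F) \<inter> space A) x \<partial>A)"
    using measurable_sets[OF graph BF] by simp
  also have "\<dots> = (\<integral>\<^sup>+ x. indicator B x * emeasure (return borel (\<phi> x)) F \<partial>A)"
    using \<open>F \<in> sets borel\<close> by (intro nn_integral_cong) (auto simp: indicator_def)
  finally show "emeasure (graph_copula A \<phi>) (B \<times> F) = (\<integral>\<^sup>+ x. indicator B x * emeasure (return borel (\<phi> x)) F \<partial>A)" .
qed

lemma regression_return: "regression (\<lambda>x. return borel (\<phi> x)) x = \<phi> x"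
  unfolding regression_def by (rule integral_return) auto

lemma Lp_norm_regression_diff_attained:
  fixes A :: "(real^'n) measure"
  assumes A: "copula_measure_vec A" and p: "1 \<le> p"
  shows "\<exists>C1 \<in> copulas_with_marg A. \<exists>C2 \<in> copulas_with_marg A. \<exists>K1 K2.
            markov_kernel_of C1 K1 \<and> markov_kernel_of C2 K2 \<and>
            Lp_norm_A A p (\<lambda>x. regression K1 x - regression K2 x) = (p + 1) powr (- 1 / p)"
proof -
  fix i :: 'n
  have sets_A: "sets A = sets borel"
    using A by (simp add: copula_measure_vec_def)
  have X: "distr A lborel (\<lambda>x. x $ i) = unif01"
    using A by (simp add: copula_measure_vec_def)
  have coord: "(\<lambda>x::real^'n. x $ i) \<in> A \<rightarrow>\<^sub>M lborel"
    by (simp add: measurable_cong_sets[OF sets_A refl])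
  have "distr A lborel (\<lambda>x. 1 - x $ i) = distr (distr A lborel (\<lambda>x. x $ i)) lborel (\<lambda>y::real. 1 - y)"
    by (subst distr_distr[OF _ coord]) (simp_all add: o_def)
  then have reflected_X: "distr A lborel (\<lambda>x. 1 - x $ i) = unif01"
    by (simp add: X distr_unif01_reflect)
  have "(\<integral>\<^sup>+ x. ennreal (\<bar>x $ i - (1 - x $ i)\<bar> powr p) \<partial>A)
      = (\<integral>\<^sup>+ y. ennreal (\<bar>2 * y - 1\<bar> powr p) \<partial>distr A lborel (\<lambda>x. x $ i))"
    by (subst nn_integral_distr[OF coord]) (simp_all add: algebra_simps)
  also have "\<dots> = ennreal (1/(p+1))"
    unfolding X using p by (intro nn_integral_unif01_abs_powr_centred) simp
  finally have "Lp_norm_A A p (\<lambda>x. regression (\<lambda>x. return borel (x $ i)) x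
      - regression (\<lambda>x. return borel (1 - x $ i)) x) = (p + 1) powr (- 1 / p)"
    using p by (simp add: Lp_norm_A_def regression_return powr_minus_divide powr_divide)
  moreover have "(\<lambda>x::real^'n. x $ i) \<in> borel_measurable borel"
    and "(\<lambda>x::real^'n. 1 - x $ i) \<in> borel_measurable borel"
    by simp_all
  ultimately show ?thesis
    using graph_copula_in_copulas_with_marg[OF A _ X] graph_copula_in_copulas_with_marg[OF A _ reflected_X]
      markov_kernel_of_graph_copula[OF sets_A] by blast
qed

theorem corollary6:
  fixes A :: "(real ^ 'n) measure" and p :: real
  assumes "copula_measure_vec A" and "1 \<le> p"
  shows "(\<forall>C1 \<in> copulas_with_marg A. \<forall>C2 \<in> copulas_with_marg A. \<forall>K1 K2.
            markov_kernel_of C1 K1 \<longrightarrow> markov_kernel_of C2 K2 \<longrightarrow>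
            Lp_norm_A A p (\<lambda>x. regression K1 x - regression K2 x) \<le> (p + 1) powr (- 1 / p))
       \<and> (\<exists>C1 \<in> copulas_with_marg A. \<exists>C2 \<in> copulas_with_marg A. \<exists>K1 K2.
            markov_kernel_of C1 K1 \<and> markov_kernel_of C2 K2 \<and>
            Lp_norm_A A p (\<lambda>x. regression K1 x - regression K2 x) = (p + 1) powr (- 1 / p))"
  using Lp_norm_regression_diff_le[OF \<open>1 \<le> p\<close>] Lp_norm_regression_diff_attained[OF assms] by blast

end
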